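(* Let $(Q,\cdot)$ be a groupoid of order $n$ with elements ordered as $q_1,\dots,q_n$. If $Q$ is $(n-1)$-translatable with respect to this ordering, then $Q$ is commutative.
   Context: A finite groupoid $(Q,\cdot)$ with ordering $q_1,\dots,q_n$ of its elements is $k$-translatable ($1\le k<n$) with respect to this ordering if for all $i\in\{2,\dots,n\}$ and $j\in\{1,\dots,n\}$, $q_i\cdot q_j=q_{i-1}\cdot q_{j-k}$, where the index $j-k$ is taken modulo $n$ in $\{1,\dots,n\}$; i.e. each row of the Cayley table is obtained from the previous one by moving its last $k$ entries to the front. *)

theory Defs
  imports Main
begin

text \<open>Index j - k taken modulo n, with representative in {1..n}
  (for 1 \<le> j \<le> n and k < n).\<close>
definition mod_index :: "nat \<Rightarrow> nat \<Rightarrow> nat \<Rightarrow> nat" where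
  "mod_index n j k = ((j + n - k - 1) mod n) + 1"

definition k_translatable ::
  "'a set \<Rightarrow> ('a \<Rightarrow> 'a \<Rightarrow> 'a) \<Rightarrow> (nat \<Rightarrow> 'a) \<Rightarrow> nat \<Rightarrow> bool" where
  "k_translatable Q mult q k \<longleftrightarrow>
     (let n = card Q in
       1 \<le> k \<and> k < n \<and>
       (\<forall>i\<in>{2..n}. \<forall>j\<in>{1..n}. mult (q i) (q j) = mult (q (i - 1)) (q (mod_index n j k))))"

definition groupoid :: "'a set \<Rightarrow> ('a \<Rightarrow> 'a \<Rightarrow> 'a) \<Rightarrow> bool" where
  "groupoid Q mult \<longleftrightarrow> (\<forall>x\<in>Q. \<forall>y\<in>Q. mult x y \<in> Q)"

end

theory Submission
  imports Defs
begin

text \<open>Iterating the translation rule from row 1 shows that in a k-translatable groupoid of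
  order n every row i is row 1 cyclically shifted by (i - 1)(n - k) places. For k = n - 1 the
  shift is i - 1, so q i * q j = q 1 * q m with m - 1 \<equiv> (i - 1) + (j - 1) (mod n), which is
  symmetric in i and j.\<close>

lemma mod_index_eq:
  assumes "1 \<le> j" and "k < n"
  shows "mod_index n j k = (j - 1 + (n - k)) mod n + 1"
  using assms unfolding mod_index_def by (simp add: add.commute)

lemma k_translatable_row_shift:
  assumes tr: "k_translatable Q mult q k"
    and i: "i \<in> {1..card Q}" and j: "j \<in> {1..card Q}"
  shows "mult (q i) (q j) = mult (q 1) (q ((j - 1 + (i - 1) * (card Q - k)) mod card Q + 1))"
  using i j
proof (induction i arbitrary: j)
  case 0
  then show ?case by simp
next
  case (Suc i)
  define n where "n = card Q"
  have k: "k < n" and rule: "\<And>i j. i \<in> {2..n} \<Longrightarrow> j \<in> {1..n} \<Longrightarrow>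
      mult (q i) (q j) = mult (q (i - 1)) (q (mod_index n j k))"
    using tr unfolding k_translatable_def Let_def n_def by auto
  show ?case
  proof (cases "i = 0")
    case True
    have "j - 1 < card Q" using Suc.prems by auto
    with True Suc.prems show ?thesis by simp
  next
    case False
    define j' where "j' = (j - 1 + (n - k)) mod n + 1"
    have n_pos: "0 < n" using k by simp
    have j': "j' \<in> {1..n}" using n_pos by (simp add: j'_def Suc_le_eq)
    have "mult (q (Suc i)) (q j) = mult (q i) (q j')"
      using rule[of "Suc i" j] Suc.prems False mod_index_eq[of j k n] k
      by (simp add: j'_def n_def)
    also have "\<dots> = mult (q 1) (q ((j' - 1 + (i - 1) * (n - k)) mod n + 1))"
      using Suc.IH[of j'] Suc.prems False j' by (simp add: n_def)
    also have "(j' - 1 + (i - 1) * (n - k)) mod n = (j - 1 + (Suc i - 1) * (n - k)) mod n"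
    proof -
      have "(j' - 1 + (i - 1) * (n - k)) mod n = (j - 1 + (n - k) + (i - 1) * (n - k)) mod n"
        by (simp add: j'_def mod_add_left_eq)
      also have "j - 1 + (n - k) + (i - 1) * (n - k) = j - 1 + (Suc i - 1) * (n - k)"
        using False by (cases i) simp_all
      finally show ?thesis .
    qed
    finally show ?thesis by (simp add: n_def)
  qed
qed

theorem proposition8p4:
  fixes Q :: "'a set" and mult :: "'a \<Rightarrow> 'a \<Rightarrow> 'a" and q :: "nat \<Rightarrow> 'a" and n :: nat
  assumes "finite Q"
    and "groupoid Q mult"
    and "card Q = n"
    and "bij_betw q {1..n} Q"
    and "k_translatable Q mult q (n - 1)"
  shows "\<forall>x\<in>Q. \<forall>y\<in>Q. mult x y = mult y x"
proof (intro ballI)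
  fix x y assume "x \<in> Q" "y \<in> Q"
  moreover have "Q = q ` {1..n}" using assms(4) by (simp add: bij_betw_def)
  ultimately obtain a b where a: "a \<in> {1..n}" "x = q a" and b: "b \<in> {1..n}" "y = q b"
    by blast
  have "n - (n - 1) = 1"
    using assms(3,5) unfolding k_translatable_def by simp
  then have row: "mult (q i) (q j) = mult (q 1) (q ((j - 1 + (i - 1)) mod n + 1))"
    if "i \<in> {1..n}" "j \<in> {1..n}" for i j
    using k_translatable_row_shift[OF assms(5)] that assms(3) by simp
  show "mult x y = mult y x"
    using row[OF a(1) b(1)] row[OF b(1) a(1)] a b by (simp add: add.commute)
qed

end
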